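(* Let $N\ge 1$ and $n\ge 1$ be integers, and let $x>1$ and $1\le y<2$ be real numbers. Let $\mathcal{S}_0,\dots,\mathcal{S}_{n-1}$ be nonempty sets of QPSK sequences of length $N$ such that, for every $0\le i\le n-1$: (a) $\mathrm{PEP}(\mathbf{s})\le x\,y^{2i}N$ for every $\mathbf{s}\in\mathcal{S}_i$; and (b) if $\mathbf{s}\in\mathcal{S}_i$ then $j^m\mathbf{s}\in\mathcal{S}_i$ for every $m\in\mathbb{Z}_4$. Let $\mathbf{a}$ be the $2^{2n}$-QAM sequence associated with $(\mathbf{s}_0,\dots,\mathbf{s}_{n-1})$, where $\mathbf{s}_i\in\mathcal{S}_i$ for all $i$. Then $$\mathrm{PEP}(\mathbf{a})\le 2^{2n-3}\left(\frac{1-(\frac{y}{2})^{n}}{1-\frac{y}{2}}\right)^2\cdot x\cdot N.$$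
   Context: Let $j=\sqrt{-1}$. Fix $T>0$ and reals $f_0,\Delta f$ with $T\Delta f$ a positive integer; set $f_k=f_0+k\Delta f$. For a complex sequence $\mathbf{a}=(a_0,\dots,a_{N-1})$ define $S_{\mathbf{a}}(t)=\sum_{k=0}^{N-1}a_ke^{2\pi j f_k t}$, $P_{\mathbf{a}}(t)=|S_{\mathbf{a}}(t)|^2$, and $\mathrm{PEP}(\mathbf{a})=\sup_{t\in[0,T]}P_{\mathbf{a}}(t)$. A QPSK sequence of length $N$ is a sequence $\mathbf{s}=(s_0,\dots,s_{N-1})$ with every $s_k\in\{1,j,-1,-j\}$; $j^m\mathbf{s}=(j^ms_0,\dots,j^ms_{N-1})$. The $2^{2n}$-QAM sequence associated with QPSK sequences $\mathbf{s}_0,\dots,\mathbf{s}_{n-1}$, $\mathbf{s}_i=(s_{i,0},\dots,s_{i,N-1})$, is $\mathbf{a}=(a_0,\dots,a_{N-1})$ with $a_k=\frac{\sqrt2}{2}e^{\pi j/4}\sum_{i=0}^{n-1}2^{n-1-i}s_{i,k}$. *)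

theory Defs
  imports Complex_Main
begin

definition ofdm_sig :: "real \<Rightarrow> real \<Rightarrow> complex list \<Rightarrow> real \<Rightarrow> complex" where
  "ofdm_sig f0 df a t =
     (\<Sum>k<length a. a ! k * exp (2 * of_real pi * \<i> * of_real (f0 + real k * df) * of_real t))"

definition inst_power :: "real \<Rightarrow> real \<Rightarrow> complex list \<Rightarrow> real \<Rightarrow> real" where
  "inst_power f0 df a t = (cmod (ofdm_sig f0 df a t))\<^sup>2"

definition PEP :: "real \<Rightarrow> real \<Rightarrow> real \<Rightarrow> complex list \<Rightarrow> real" where
  "PEP T f0 df a = (SUP t\<in>{0..T}. inst_power f0 df a t)"

definition qpsk_seq :: "nat \<Rightarrow> complex list \<Rightarrow> bool" where
  "qpsk_seq N s \<longleftrightarrow> length s = N \<and> set s \<subseteq> {1, \<i>, -1, -\<i>}"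

definition rot :: "nat \<Rightarrow> complex list \<Rightarrow> complex list" where
  "rot m s = map (\<lambda>z. \<i> ^ m * z) s"

definition qam_seq :: "nat \<Rightarrow> nat \<Rightarrow> (nat \<Rightarrow> complex list) \<Rightarrow> complex list" where
  "qam_seq n N s = map (\<lambda>k. of_real (sqrt 2 / 2) * exp (of_real pi * \<i> / 4) *
        (\<Sum>i<n. 2 ^ (n - 1 - i) * (s i ! k))) [0..<N]"

end

theory Submission
  imports Defs
begin

text \<open>By linearity the signal of the QAM sequence is a weighted sum of the QPSK signals with weights
  \<open>2^(n-1-i)\<close> and a unimodular-times-\<open>\<surd>2/2\<close> factor. The triangle inequality at each time
  bounds its modulus by \<open>\<surd>2/2 \<Sum> 2^(n-1-i) \<surd>PEP(s\<^sub>i)\<close>, and the hypothesis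
  \<open>PEP(s\<^sub>i) \<le> x y^(2i) N\<close> turns this sum into \<open>2^(n-1) \<surd>(xN)\<close> times the geometric
  sum \<open>\<Sum> (y/2)^i\<close>.\<close>

lemma norm_exp_2pi_i: "cmod (exp (2 * of_real pi * \<i> * of_real (r::real) * of_real t)) = 1"
proof -
  have "2 * of_real pi * \<i> * of_real r * of_real t = \<i> * of_real (2 * pi * r * t)" by simp
  then show ?thesis by (simp only:) (simp add: norm_exp_eq_Re)
qed

lemma norm_ofdm_sig_le: "cmod (ofdm_sig f0 df a t) \<le> (\<Sum>k<length a. cmod (a ! k))"
  unfolding ofdm_sig_def
  by (rule order_trans[OF norm_sum]) (simp add: norm_mult norm_exp_2pi_i)

lemma inst_power_le_PEP:
  assumes "t \<in> {0..T}"
  shows "inst_power f0 df a t \<le> PEP T f0 df a"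
  unfolding PEP_def
proof (rule cSUP_upper[OF assms])
  show "bdd_above (inst_power f0 df a ` {0..T})"
    unfolding inst_power_def
    by (rule bdd_aboveI[where M = "(\<Sum>k<length a. cmod (a ! k))\<^sup>2"])
       (auto intro!: power_mono norm_ofdm_sig_le)
qed

lemma PEP_nonneg:
  assumes "T \<ge> 0"
  shows "PEP T f0 df a \<ge> 0"
  using inst_power_le_PEP[of 0 T f0 df a] assms
  unfolding inst_power_def by (meson atLeastAtMost_iff order.refl order_trans zero_le_power2)

lemma norm_ofdm_sig_le_sqrt_PEP:
  assumes "t \<in> {0..T}"
  shows "cmod (ofdm_sig f0 df a t) \<le> sqrt (PEP T f0 df a)"
  using real_sqrt_le_mono[OF inst_power_le_PEP[OF assms, of f0 df a]]
  by (simp add: inst_power_def)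

lemma ofdm_sig_qam_seq:
  assumes "\<And>i. i < n \<Longrightarrow> length (s i) = N"
  shows "ofdm_sig f0 df (qam_seq n N s) t =
     of_real (sqrt 2 / 2) * exp (of_real pi * \<i> / 4) *
       (\<Sum>i<n. 2 ^ (n - 1 - i) * ofdm_sig f0 df (s i) t)"
proof -
  let ?e = "\<lambda>k. exp (2 * of_real pi * \<i> * of_real (f0 + real k * df) * of_real t)"
  let ?c = "of_real (sqrt 2 / 2) * exp (of_real pi * \<i> / 4) :: complex"
  have "ofdm_sig f0 df (qam_seq n N s) t =
        (\<Sum>k<N. ?c * (\<Sum>i<n. 2 ^ (n - 1 - i) * (s i ! k)) * ?e k)"
    unfolding ofdm_sig_def qam_seq_def by (simp add: atLeast0LessThan)
  also have "\<dots> = ?c * (\<Sum>i<n. \<Sum>k<N. 2 ^ (n - 1 - i) * (s i ! k) * ?e k)"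
    by (subst sum.swap) (simp add: sum_distrib_left sum_distrib_right mult.assoc)
  also have "\<dots> = ?c * (\<Sum>i<n. 2 ^ (n - 1 - i) * ofdm_sig f0 df (s i) t)"
    unfolding ofdm_sig_def
    by (intro arg_cong[where f = "\<lambda>z. ?c * z"] sum.cong refl)
       (simp add: assms sum_distrib_left mult.assoc)
  finally show ?thesis .
qed

lemma PEP_qam_seq_le:
  assumes "T \<ge> 0" and "\<And>i. i < n \<Longrightarrow> length (s i) = N"
  shows "PEP T f0 df (qam_seq n N s)
           \<le> (\<Sum>i<n. 2 ^ (n - 1 - i) * sqrt (PEP T f0 df (s i)))\<^sup>2 / 2"
  unfolding PEP_def[of T f0 df "qam_seq n N s"]
proof (rule cSUP_least)
  show "{0..T} \<noteq> {}" using assms(1) by simp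
next
  fix t assume t: "t \<in> {0..T}"
  let ?B = "\<Sum>i<n. 2 ^ (n - 1 - i) * sqrt (PEP T f0 df (s i))"
  have "cmod (ofdm_sig f0 df (qam_seq n N s) t) =
        sqrt 2 / 2 * cmod (\<Sum>i<n. 2 ^ (n - 1 - i) * ofdm_sig f0 df (s i) t)"
    by (simp add: ofdm_sig_qam_seq[OF assms(2)] norm_mult norm_exp_eq_Re)
  also have "\<dots> \<le> sqrt 2 / 2 * ?B"
    by (intro mult_left_mono order_trans[OF norm_sum] sum_mono)
       (auto simp: norm_mult norm_power intro!: mult_left_mono norm_ofdm_sig_le_sqrt_PEP[OF t])
  finally have "inst_power f0 df (qam_seq n N s) t \<le> (sqrt 2 / 2 * ?B)\<^sup>2"
    unfolding inst_power_def by (rule power_mono) simp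
  then show "inst_power f0 df (qam_seq n N s) t \<le> ?B\<^sup>2 / 2"
    by (simp add: power_mult_distrib power_divide)
qed

lemma sum_binary_weights_geometric:
  "(\<Sum>i<n. 2 ^ (n - 1 - i) * (y::real) ^ i) = 2 ^ (n - 1) * (\<Sum>i<n. (y / 2) ^ i)"
  unfolding sum_distrib_left
proof (rule sum.cong[OF refl])
  fix i assume "i \<in> {..<n}"
  then have "(2::real) ^ (n - 1) = 2 ^ (n - 1 - i) * 2 ^ i"
    by (simp add: power_add[symmetric])
  then show "2 ^ (n - 1 - i) * y ^ i = 2 ^ (n - 1) * (y / 2) ^ i"
    by (simp add: power_divide)
qed

lemma two_powr_2n_minus_3:
  assumes "n \<ge> 1"
  shows "2 powr (2 * real n - 3) = (2 ^ (n - 1))\<^sup>2 / (2::real)"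
proof -
  have "2 * real n - 3 = real (2 * (n - 1)) - 1" using assms by (simp add: of_nat_diff)
  then have "2 powr (2 * real n - 3) = 2 powr real (2 * (n - 1)) / 2 powr 1"
    by (simp only: powr_diff)
  also have "\<dots> = 2 ^ (2 * (n - 1)) / 2"
    by (simp only: powr_realpow powr_one zero_less_numeral)
  also have "(2::real) ^ (2 * (n - 1)) = (2 ^ (n - 1))\<^sup>2"
    by (metis power_mult mult.commute)
  finally show ?thesis .
qed

theorem lemma1:
  fixes T f0 df x y :: real and N n :: nat
    and S :: "nat \<Rightarrow> complex list set" and s :: "nat \<Rightarrow> complex list"
  assumes "T > 0" and "\<exists>m::nat. m > 0 \<and> T * df = real m"
    and "N \<ge> 1" and "n \<ge> 1" and "x > 1" and "1 \<le> y" and "y < 2"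
    and "\<And>i. i < n \<Longrightarrow> S i \<noteq> {}"
    and "\<And>i u. i < n \<Longrightarrow> u \<in> S i \<Longrightarrow> qpsk_seq N u"
    and "\<And>i u. i < n \<Longrightarrow> u \<in> S i \<Longrightarrow> PEP T f0 df u \<le> x * y ^ (2 * i) * real N"
    and "\<And>i u m. i < n \<Longrightarrow> u \<in> S i \<Longrightarrow> m < 4 \<Longrightarrow> rot m u \<in> S i"
    and "\<And>i. i < n \<Longrightarrow> s i \<in> S i"
  shows "PEP T f0 df (qam_seq n N s)
           \<le> 2 powr (2 * real n - 3) * ((1 - (y / 2) ^ n) / (1 - y / 2))\<^sup>2 * x * real N"
proof -
  define G where "G = (\<Sum>i<n. (y / 2) ^ i)"
  have len: "\<And>i. i < n \<Longrightarrow> length (s i) = N"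
    using assms(9,12) unfolding qpsk_seq_def by blast
  have xN: "x * real N \<ge> 0" using assms(5) by simp
  have sqrt_PEP: "sqrt (PEP T f0 df (s i)) \<le> y ^ i * sqrt (x * real N)" if "i < n" for i
  proof -
    have "sqrt (PEP T f0 df (s i)) \<le> sqrt ((y ^ i)\<^sup>2 * (x * real N))"
      using assms(10)[OF that assms(12)[OF that]]
      by (simp add: power_mult[symmetric] mult.commute mult.left_commute)
    then show ?thesis using assms(6) by (simp add: real_sqrt_mult)
  qed
  have "PEP T f0 df (qam_seq n N s) \<le> (\<Sum>i<n. 2 ^ (n - 1 - i) * sqrt (PEP T f0 df (s i)))\<^sup>2 / 2"
    using assms(1) len by (intro PEP_qam_seq_le) auto
  also have "\<dots> \<le> (\<Sum>i<n. 2 ^ (n - 1 - i) * (y ^ i * sqrt (x * real N)))\<^sup>2 / 2"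
    using PEP_nonneg[of T] assms(1)
    by (auto intro!: divide_right_mono power_mono sum_mono mult_left_mono sqrt_PEP sum_nonneg)
  also have "\<dots> = ((\<Sum>i<n. 2 ^ (n - 1 - i) * y ^ i) * sqrt (x * real N))\<^sup>2 / 2"
    by (simp add: sum_distrib_right mult.assoc)
  also have "\<dots> = (2 ^ (n - 1))\<^sup>2 / 2 * G\<^sup>2 * (x * real N)"
    unfolding sum_binary_weights_geometric G_def using xN by (simp add: power_mult_distrib)
  also have "G = (1 - (y / 2) ^ n) / (1 - y / 2)"
    unfolding G_def using assms(7) by (simp add: sum_gp_strict)
  finally show ?thesis by (simp add: two_powr_2n_minus_3[OF assms(4)] mult.assoc)
qed

end
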